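(* Let $f\in\mathcal{B}$ satisfy $\|f-f_0\|_{\mathcal{B}}<\frac14$, where $f_0=10\cosh-12$. Then $f\colon\mathbb{D}\to f(\mathbb{D})$ is a quadratic-like map and $f(0)\in(-\infty,-1)$.
   Context: $\mathcal{B}$ is the real Banach space of real and even entire maps $f$ (i.e. $f(\bar z)=\overline{f(z)}$, $f(-z)=f(z)$) such that the sequence $(f^{(j)}(0))_{j\ge0}$ is bounded, with norm $\|f\|_{\mathcal{B}}=\sup_{j\ge0}|f^{(j)}(0)|$; $f_0$ is the map $z\mapsto10\cosh(z)-12$. $\mathbb{D}$ is the open unit disk. A quadratic-like map is a holomorphic proper map $f\colon V\to W$ of degree $2$, where $V,W$ are nonempty simply connected open subsets of $\mathbb{C}$ with $V$ relatively compact in $W$. *)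

theory Defs
  imports "HOL-Complex_Analysis.Complex_Analysis"
begin

definition in_B :: "(complex \<Rightarrow> complex) \<Rightarrow> bool" where
  "in_B f \<longleftrightarrow> f holomorphic_on UNIV
     \<and> (\<forall>z. f (cnj z) = cnj (f z))
     \<and> (\<forall>z. f (- z) = f z)
     \<and> bounded (range (\<lambda>j. (deriv ^^ j) f 0))"

definition B_norm :: "(complex \<Rightarrow> complex) \<Rightarrow> real" where
  "B_norm f = (SUP j. cmod ((deriv ^^ j) f 0))"

definition f0 :: "complex \<Rightarrow> complex" where
  "f0 z = 10 * cosh z - 12"

text \<open>Holomorphic proper map of degree 2 from V onto W (multiplicities counted by zorder).\<close>
definition quadratic_like :: "(complex \<Rightarrow> complex) \<Rightarrow> complex set \<Rightarrow> complex set \<Rightarrow> bool" where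
  "quadratic_like f V W \<longleftrightarrow>
     V \<noteq> {} \<and> W \<noteq> {} \<and> open V \<and> open W \<and> simply_connected V \<and> simply_connected W
     \<and> compact (closure V) \<and> closure V \<subseteq> W
     \<and> f holomorphic_on V \<and> f ` V \<subseteq> W
     \<and> (\<forall>K. compact K \<and> K \<subseteq> W \<longrightarrow> compact {z \<in> V. f z \<in> K})
     \<and> (\<forall>w\<in>W. finite {z \<in> V. f z = w}
            \<and> (\<Sum>z\<in>{z \<in> V. f z = w}. zorder (\<lambda>x. f x - w) z) = 2)"

end

theory Submission
  imports Defs
begin

(*
  Let c = f''(0)/2. The Taylor coefficients of f are within 1/4 of those of 10 cosh - 12, so
  |c| >= 39/8, |f(0) + 2| < 1/4, and the tail r(z) = f(z) - f(0) - c z^2, which has only even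
  terms of order >= 4, satisfies |r(z) - r(w)| <= (41/36) |z^2 - w^2| on the closed unit disc.
  By evenness f(z) = g(z^2) with g = f o csqrt, and g is a small perturbation of u |-> c u on
  the closed disc. Hence g is injective and continuous, so by invariance of domain
  f(D) = g(D) is open and homeomorphic to D, and by the contraction principle g(D) contains
  the closed unit disc. The fibre of f over a point of f(D) is {z, -z}: two simple zeros for
  z <> 0 (f is injective near z), a double zero for z = 0 (f'(0) = 0 <> f''(0)); and no fibre
  reaches the unit circle, which gives properness.
*)

lemma fact_ge_six_mult_four_power: "6 * 4 ^ i \<le> (fact (i + 3) :: nat)"
proof (induction i)
  case 0
  show ?case by (simp add: eval_nat_numeral)
next
  case (Suc i)
  have "(6::nat) * 4 ^ Suc i = 4 * (6 * 4 ^ i)" by simp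
  also have "\<dots> \<le> (i + 4) * fact (i + 3)" using Suc by (intro mult_mono) auto
  also have "\<dots> = fact (Suc i + 3)" by (simp add: numeral_eq_Suc)
  finally show ?case .
qed

lemma half_index_over_fact_le: "real (i + 4) / 2 / fact (i + 4) \<le> 1/12 * (1/4) ^ i"
proof -
  have "fact (i + 4) = real (i + 4) * (fact (i + 3) :: real)" by (simp add: numeral_eq_Suc)
  then have "real (i + 4) / 2 / fact (i + 4) = 1 / (2 * fact (i + 3))" by simp
  also have "\<dots> \<le> 1 / (12 * 4 ^ i)"
    using of_nat_mono[OF fact_ge_six_mult_four_power[of i]] by (intro divide_left_mono) auto
  finally show ?thesis by (simp add: power_divide)
qed

lemma norm_power_diff_even:
  fixes z w :: "'a::{real_normed_algebra_1, comm_monoid_mult}"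
  assumes "norm z \<le> 1" "norm w \<le> 1" "even n"
  shows "norm (z ^ n - w ^ n) \<le> n / 2 * norm (z\<^sup>2 - w\<^sup>2)"
proof -
  obtain k where n: "n = 2 * k" using \<open>even n\<close> by blast
  have "norm ((z\<^sup>2) ^ k - (w\<^sup>2) ^ k) \<le> k * norm (z\<^sup>2 - w\<^sup>2)"
    using assms by (intro norm_power_diff order_trans[OF norm_power_ineq] power_le_one) auto
  then show ?thesis by (simp add: n power_mult)
qed

lemma norm_even_power_term_le:
  fixes b z w :: complex
  assumes "even i" "cmod b \<le> M" "cmod z \<le> 1" "cmod w \<le> 1"
  shows "cmod (b / fact (i + 4) * (z ^ (i + 4) - w ^ (i + 4))) \<le> M / 12 * (1/4) ^ i * cmod (z\<^sup>2 - w\<^sup>2)"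
proof -
  have "0 \<le> M" using assms(2) norm_ge_zero order_trans by blast
  have "cmod (b / fact (i + 4) * (z ^ (i + 4) - w ^ (i + 4)))
      \<le> M / fact (i + 4) * (real (i + 4) / 2 * cmod (z\<^sup>2 - w\<^sup>2))"
    unfolding norm_mult norm_divide norm_fact using assms \<open>0 \<le> M\<close>
    by (intro mult_mono divide_right_mono norm_power_diff_even) auto
  also have "\<dots> = M * (real (i + 4) / 2 / fact (i + 4)) * cmod (z\<^sup>2 - w\<^sup>2)" by simp
  also have "\<dots> \<le> M * (1/12 * (1/4) ^ i) * cmod (z\<^sup>2 - w\<^sup>2)"
    using \<open>0 \<le> M\<close> by (intro mult_right_mono mult_left_mono half_index_over_fact_le) auto
  finally show ?thesis by simp
qed

lemma higher_deriv_even_odd_eq_0: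
  fixes f :: "complex \<Rightarrow> complex"
  assumes "f holomorphic_on UNIV" "\<And>z. f (-z) = f z" "odd n"
  shows "(deriv ^^ n) f 0 = 0"
proof -
  have "(deriv ^^ n) (\<lambda>w. f (-1 * w)) 0 = (-1) ^ n * (deriv ^^ n) f (-1 * 0)"
    using assms(1) by (rule higher_deriv_compose_linear[where S = UNIV and T = UNIV]) auto
  moreover have "(\<lambda>w. f (-1 * w)) = f" using assms(2) by simp
  ultimately show ?thesis using \<open>odd n\<close> by simp
qed

lemma even_entire_near_quadratic:
  fixes f :: "complex \<Rightarrow> complex"
  assumes hol: "f holomorphic_on UNIV" and even: "\<And>z. f (-z) = f z"
    and bound: "\<And>n. 4 \<le> n \<Longrightarrow> cmod ((deriv ^^ n) f 0) \<le> M"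
    and z: "cmod z \<le> 1" and w: "cmod w \<le> 1"
  shows "cmod (f z - f w - (deriv ^^ 2) f 0 / 2 * (z\<^sup>2 - w\<^sup>2)) \<le> M / 9 * cmod (z\<^sup>2 - w\<^sup>2)"
proof -
  have "0 \<le> M" using bound[of 4] norm_ge_zero order_trans by blast
  define a where "a n = (deriv ^^ n) f 0 / fact n" for n
  define C where "C = cmod (z\<^sup>2 - w\<^sup>2)"
  define t where "t i = a (i + 4) * (z ^ (i + 4) - w ^ (i + 4))" for i
  have "(\<lambda>n. a n * x ^ n) sums f x" for x
  proof -
    have "f holomorphic_on ball 0 (cmod x + 1)" using hol by (rule holomorphic_on_subset) simp
    from holomorphic_power_series[OF this, of x] show ?thesis by (simp add: a_def)
  qed
  then have "(\<lambda>n. a n * z ^ n - a n * w ^ n) sums (f z - f w)" by (intro sums_diff)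
  then have series: "(\<lambda>n. a n * (z ^ n - w ^ n)) sums (f z - f w)" by (simp add: right_diff_distrib)
  have "(deriv ^^ 1) f 0 = 0" "(deriv ^^ 3) f 0 = 0"
    by (rule higher_deriv_even_odd_eq_0[OF hol even]; simp)+
  then have initial: "(\<Sum>n<4. a n * (z ^ n - w ^ n)) = (deriv ^^ 2) f 0 / 2 * (z\<^sup>2 - w\<^sup>2)"
    by (simp add: a_def eval_nat_numeral del: funpow.simps)
  have tail: "t sums (f z - f w - (deriv ^^ 2) f 0 / 2 * (z\<^sup>2 - w\<^sup>2))"
    unfolding t_def initial[symmetric] by (rule sums_split_initial_segment[OF series])
  have term_le: "norm (t i) \<le> M / 12 * (1/4) ^ i * C" for i
  proof (cases "even i")
    case True
    then show ?thesis
      unfolding t_def a_def C_def using bound[of "i + 4"] z w by (rule norm_even_power_term_le) simp_all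
  next
    case False
    then have "t i = 0"
      using higher_deriv_even_odd_eq_0[OF hol even, of "i + 4"] by (simp add: t_def a_def)
    then show ?thesis using \<open>0 \<le> M\<close> by (simp add: C_def)
  qed
  have geometric: "(\<lambda>i. M / 12 * (1/4) ^ i * C) sums (M / 12 * (4/3) * C)"
    using geometric_sums[of "1/4 :: real"] by (intro sums_mult sums_mult2) simp_all
  have "summable (\<lambda>i. norm (t i))"
    using term_le geometric by (intro summable_comparison_test'[OF sums_summable[OF geometric]]) auto
  then have "norm (suminf t) \<le> (\<Sum>i. M / 12 * (1/4) ^ i * C)"
    using term_le sums_summable[OF geometric] by (intro summable_norm[THEN order_trans] suminf_le)
  also have "\<dots> = M / 9 * C" using geometric by (simp add: sums_iff)
  finally show ?thesis using tail by (simp add: sums_iff C_def)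
qed

lemma near_linear_inj_on:
  fixes g :: "'a::real_normed_div_algebra \<Rightarrow> 'a"
  assumes near: "\<And>u v. u \<in> S \<Longrightarrow> v \<in> S \<Longrightarrow>
      norm (g u - g v - c * (u - v)) \<le> \<epsilon> * norm (u - v)"
    and "\<epsilon> < norm c"
  shows "inj_on g S"
proof (rule inj_onI, rule ccontr)
  fix u v assume "u \<in> S" "v \<in> S" "g u = g v" "u \<noteq> v"
  then have "norm c * norm (u - v) \<le> \<epsilon> * norm (u - v)"
    using near[of u v] by (simp add: norm_mult)
  with \<open>u \<noteq> v\<close> have "norm c \<le> \<epsilon>" by (simp add: mult_right_le_imp_le)
  with \<open>\<epsilon> < norm c\<close> show False by simp
qed

lemma near_linear_lipschitz_on:
  fixes g :: "'a::real_normed_div_algebra \<Rightarrow> 'a"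
  assumes near: "\<And>u v. u \<in> S \<Longrightarrow> v \<in> S \<Longrightarrow>
      norm (g u - g v - c * (u - v)) \<le> \<epsilon> * norm (u - v)"
    and "0 \<le> \<epsilon>"
  shows "(norm c + \<epsilon>)-lipschitz_on S g"
proof (rule lipschitz_onI)
  fix u v assume "u \<in> S" "v \<in> S"
  have "norm (g u - g v) \<le> norm (c * (u - v)) + norm (g u - g v - c * (u - v))"
    by (rule norm_triangle_sub)
  also have "\<dots> \<le> (norm c + \<epsilon>) * norm (u - v)"
    using near[OF \<open>u \<in> S\<close> \<open>v \<in> S\<close>] by (simp add: norm_mult distrib_right)
  finally show "dist (g u) (g v) \<le> (norm c + \<epsilon>) * dist u v" by (simp add: dist_norm)
qed (use \<open>0 \<le> \<epsilon>\<close> in simp)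

lemma near_linear_image_covers_cball:
  fixes g :: "'a::{real_normed_field, banach} \<Rightarrow> 'a"
  assumes near: "\<And>u v. u \<in> cball 0 r \<Longrightarrow> v \<in> cball 0 r \<Longrightarrow>
      norm (g u - g v - c * (u - v)) \<le> \<epsilon> * norm (u - v)"
    and "0 \<le> \<epsilon>" "\<epsilon> < norm c" "0 \<le> r"
  shows "cball (g 0) ((norm c - \<epsilon>) * r) \<subseteq> g ` cball 0 r"
proof
  fix w assume w: "w \<in> cball (g 0) ((norm c - \<epsilon>) * r)"
  have "c \<noteq> 0" using assms(2,3) by auto
  define T where "T u = u - (g u - w) / c" for u
  have contraction: "dist (T u) (T v) \<le> \<epsilon> / norm c * dist u v"
    if "u \<in> cball 0 r" "v \<in> cball 0 r" for u v
  proof -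
    have "T u - T v = - ((g u - g v - c * (u - v)) / c)"
      using \<open>c \<noteq> 0\<close> by (simp add: T_def field_simps)
    then have "dist (T u) (T v) = norm (g u - g v - c * (u - v)) / norm c"
      by (simp add: dist_norm norm_divide)
    also have "\<dots> \<le> \<epsilon> * norm (u - v) / norm c"
      using near[OF that] by (simp add: divide_right_mono)
    finally show ?thesis by (simp add: dist_norm)
  qed
  have "T ` cball 0 r \<subseteq> cball 0 r"
  proof clarify
    fix u :: 'a assume u: "u \<in> cball 0 r"
    have "norm (T 0) = norm (g 0 - w) / norm c" by (simp add: T_def norm_divide)
    also have "\<dots> \<le> (norm c - \<epsilon>) * r / norm c"
      using w by (intro divide_right_mono) (auto simp: dist_norm)
    finally have "norm (T 0) \<le> (norm c - \<epsilon>) * r / norm c" .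
    moreover have "norm (T u - T 0) \<le> \<epsilon> * r / norm c"
      using contraction[OF u, of 0] u \<open>0 \<le> r\<close> \<open>0 \<le> \<epsilon>\<close>
      by (auto simp: dist_norm divide_right_mono mult_left_mono intro: order_trans)
    ultimately have "norm (T u) \<le> (norm c - \<epsilon>) * r / norm c + \<epsilon> * r / norm c"
      using norm_triangle_sub[of "T u" "T 0"] by simp
    also have "\<dots> = r" using \<open>c \<noteq> 0\<close> by (simp add: field_simps)
    finally have "norm (T u) \<le> r" .
    then show "T u \<in> cball 0 r" by simp
  qed
  moreover have "\<epsilon> / norm c < 1" using assms(2,3) by (simp add: divide_less_eq)
  ultimately obtain u where "u \<in> cball 0 r" "T u = u"
    using Banach_fix[of "cball 0 r" "\<epsilon> / norm c" T] contraction assms(2,4)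
    by (auto simp: complete_eq_closed)
  then show "w \<in> g ` cball 0 r" using \<open>c \<noteq> 0\<close> by (auto simp: T_def)
qed

locale even_near_quadratic =
  fixes f :: "complex \<Rightarrow> complex" and c :: complex and \<epsilon> :: real
  assumes holomorphic: "f holomorphic_on UNIV"
    and even: "\<And>z. f (-z) = f z"
    and second_deriv: "(deriv ^^ 2) f 0 = 2 * c"
    and near: "\<And>z w. cmod z \<le> 1 \<Longrightarrow> cmod w \<le> 1 \<Longrightarrow>
      cmod (f z - f w - c * (z\<^sup>2 - w\<^sup>2)) \<le> \<epsilon> * cmod (z\<^sup>2 - w\<^sup>2)"
    and eps_less: "\<epsilon> < cmod c"
begin

lemma eps_nonneg: "0 \<le> \<epsilon>"
proof -
  have "cmod (f 1 - f 0 - c) \<le> \<epsilon>" using near[of 1 0] by simp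
  then show ?thesis by (rule order_trans[OF norm_ge_zero])
qed

lemma f_csqrt_square: "f (csqrt (z\<^sup>2)) = f z"
proof -
  have "csqrt (z\<^sup>2) = z \<or> csqrt (z\<^sup>2) = -z"
    using power2_eq_iff[of "csqrt (z\<^sup>2)" z] power2_csqrt[of "z\<^sup>2"] by blast
  then show ?thesis using even by auto
qed

lemma csqrt_near_linear:
  assumes "u \<in> cball 0 1" "v \<in> cball 0 1"
  shows "cmod ((f \<circ> csqrt) u - (f \<circ> csqrt) v - c * (u - v)) \<le> \<epsilon> * cmod (u - v)"
  using near[of "csqrt u" "csqrt v"] assms by simp

lemma inj_on_csqrt: "inj_on (f \<circ> csqrt) (cball 0 1)"
  using csqrt_near_linear eps_less by (rule near_linear_inj_on)

lemma eq_iff_square_eq: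
  assumes "cmod z \<le> 1" "cmod w \<le> 1"
  shows "f z = f w \<longleftrightarrow> z\<^sup>2 = w\<^sup>2"
proof
  assume "f z = f w"
  then have "(f \<circ> csqrt) (z\<^sup>2) = (f \<circ> csqrt) (w\<^sup>2)" by (simp add: f_csqrt_square)
  with inj_on_csqrt show "z\<^sup>2 = w\<^sup>2"
    by (rule inj_onD) (use assms in \<open>auto simp: norm_power power_le_one\<close>)
qed (metis f_csqrt_square)

lemma image_ball_eq: "f ` ball 0 1 = (f \<circ> csqrt) ` ball 0 1"
proof (intro equalityI image_subsetI)
  fix z :: complex assume "z \<in> ball 0 1"
  then have "z\<^sup>2 \<in> ball 0 1" by (simp add: norm_power power_less_one_iff abs_square_less_1)
  then show "f z \<in> (f \<circ> csqrt) ` ball 0 1" by (metis comp_apply f_csqrt_square image_eqI)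
next
  fix u :: complex assume "u \<in> ball 0 1"
  then show "(f \<circ> csqrt) u \<in> f ` ball 0 1" by simp
qed

lemma continuous_on_csqrt: "continuous_on (ball 0 1) (f \<circ> csqrt)"
proof -
  have "(cmod c + \<epsilon>)-lipschitz_on (ball 0 1) (f \<circ> csqrt)"
    using eps_nonneg by (intro near_linear_lipschitz_on csqrt_near_linear) auto
  then show ?thesis by (rule lipschitz_on_continuous_on)
qed

lemma open_image_ball: "open (f ` ball 0 1)"
  unfolding image_ball_eq
  by (rule invariance_of_domain[OF continuous_on_csqrt open_ball
      inj_on_subset[OF inj_on_csqrt ball_subset_cball]])

lemma simply_connected_image_ball: "simply_connected (f ` ball 0 1)"
proof -
  have "ball (0::complex) 1 homeomorphic (f \<circ> csqrt) ` ball 0 1"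
    by (rule invariance_of_domain_homeomorphic[OF open_ball continuous_on_csqrt _
        inj_on_subset[OF inj_on_csqrt ball_subset_cball]]) simp
  then show ?thesis unfolding image_ball_eq
    using homeomorphic_simply_connected convex_imp_simply_connected[OF convex_ball] by blast
qed

lemma cball_subset_image_ball:
  assumes "0 \<le> R" "R + cmod (f 0) < cmod c - \<epsilon>"
  shows "cball 0 R \<subseteq> f ` ball 0 1"
proof -
  define r where "r = (R + cmod (f 0)) / (cmod c - \<epsilon>)"
  have r: "0 \<le> r" "r < 1" "(cmod c - \<epsilon>) * r = R + cmod (f 0)"
    using assms eps_less by (auto simp: r_def field_simps)
  have "cball 0 R \<subseteq> cball ((f \<circ> csqrt) 0) ((cmod c - \<epsilon>) * r)"
    using r(3) by (simp add: cball_subset_cball_iff)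
  also have "\<dots> \<subseteq> (f \<circ> csqrt) ` cball 0 r"
    using csqrt_near_linear r(1,2) eps_nonneg eps_less
    by (intro near_linear_image_covers_cball) auto
  also have "\<dots> \<subseteq> f ` ball 0 1"
    unfolding image_ball_eq using r(2) by (intro image_mono) auto
  finally show ?thesis .
qed

lemma fibre_eq:
  assumes "z \<in> ball 0 1"
  shows "{x \<in> ball 0 1. f x = f z} = {z, -z}"
proof (intro equalityI subsetI)
  fix x assume "x \<in> {x \<in> ball 0 1. f x = f z}"
  then show "x \<in> {z, -z}" using assms eq_iff_square_eq[of x z] by (simp add: power2_eq_iff)
qed (use assms even in auto)

lemma compact_preimage:
  assumes "closed K" "K \<subseteq> f ` ball 0 1"
  shows "compact {z \<in> ball 0 1. f z \<in> K}"
proof -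
  have "{z \<in> ball 0 1. f z \<in> K} = cball 0 1 \<inter> f -` K"
  proof (intro equalityI subsetI)
    fix x assume x: "x \<in> cball 0 1 \<inter> f -` K"
    then obtain z where z: "z \<in> ball 0 1" "f x = f z" using assms(2) by auto
    then have "x\<^sup>2 = z\<^sup>2" using x eq_iff_square_eq[of x z] by simp
    then have "cmod x = cmod z" by (metis norm_power power2_eq_iff_nonneg norm_ge_zero)
    with x z show "x \<in> {z \<in> ball 0 1. f z \<in> K}" by simp
  qed auto
  moreover have "closed (f -` K)"
    using continuous_on_closed_vimage[of UNIV f] holomorphic_on_imp_continuous_on[OF holomorphic]
      assms(1) by simp
  ultimately show ?thesis by (simp add: compact_Int_closed)
qed

lemma deriv_nonzero:
  assumes "z \<in> ball 0 1" "z \<noteq> 0"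
  shows "deriv f z \<noteq> 0"
proof (rule holomorphic_injective_imp_regular)
  let ?S = "ball 0 1 \<inter> ball z (cmod z)"
  show "f holomorphic_on ?S" using holomorphic by (rule holomorphic_on_subset) simp
  show "inj_on f ?S"
  proof (rule inj_onI)
    fix x y assume x: "x \<in> ?S" and y: "y \<in> ?S" and "f x = f y"
    then have "x = y \<or> x = -y" using eq_iff_square_eq[of x y] by (simp add: power2_eq_iff)
    moreover have "x \<noteq> -y"
    proof
      assume "x = -y"
      \<comment> \<open>both x and -x lie within distance cmod z of z\<close>
      have "2 * cmod z \<le> cmod (z - x) + cmod (z + x)"
        using norm_triangle_ineq[of "z - x" "z + x"] by (simp add: norm_mult)
      with x y \<open>x = -y\<close> show False by (simp add: dist_norm norm_minus_commute add.commute)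
    qed
    ultimately show "x = y" by simp
  qed
qed (use assms in auto)

lemma higher_deriv_minus_const:
  "(deriv ^^ n) (\<lambda>x. f x - w) z = (deriv ^^ n) f z - (if n = 0 then w else 0)"
  by (simp add: higher_deriv_diff[OF holomorphic holomorphic_on_const open_UNIV UNIV_I])

lemma zorder_at_nonzero:
  assumes "z \<in> ball 0 1" "z \<noteq> 0"
  shows "zorder (\<lambda>x. f x - f z) z = 1"
proof (rule zorder_zero_eqI[where S = UNIV])
  show "(deriv ^^ nat 1) (\<lambda>x. f x - f z) z \<noteq> 0"
    using deriv_nonzero[OF assms] higher_deriv_minus_const[of 1] by simp
qed (use holomorphic in \<open>auto simp: higher_deriv_minus_const intro: holomorphic_intros\<close>)

lemma zorder_at_0: "zorder (\<lambda>x. f x - f 0) 0 = 2"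
proof (rule zorder_zero_eqI[where S = UNIV])
  show "(deriv ^^ i) (\<lambda>x. f x - f 0) 0 = 0" if "i < nat 2" for i
    using that higher_deriv_even_odd_eq_0[OF holomorphic even, of 1]
    by (auto simp: higher_deriv_minus_const less_Suc_eq numeral_2_eq_2)
  show "(deriv ^^ nat 2) (\<lambda>x. f x - f 0) 0 \<noteq> 0"
    using second_deriv eps_nonneg eps_less by (auto simp: higher_deriv_minus_const)
qed (use holomorphic in \<open>auto intro: holomorphic_intros\<close>)

lemma fibre_multiplicity:
  assumes "w \<in> f ` ball 0 1"
  shows "finite {z \<in> ball 0 1. f z = w}"
    and "(\<Sum>z \<in> {z \<in> ball 0 1. f z = w}. zorder (\<lambda>x. f x - w) z) = 2"
proof -
  obtain z where z: "z \<in> ball 0 1" "w = f z" using assms by auto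
  then show "finite {z \<in> ball 0 1. f z = w}" using fibre_eq by simp
  show "(\<Sum>z \<in> {z \<in> ball 0 1. f z = w}. zorder (\<lambda>x. f x - w) z) = 2"
  proof (cases "z = 0")
    case True
    then show ?thesis using z fibre_eq zorder_at_0 by simp
  next
    case False
    have "zorder (\<lambda>x. f x - w) (-z) = 1"
      using zorder_at_nonzero[of "-z"] z False even by simp
    then show ?thesis using z fibre_eq zorder_at_nonzero False by simp
  qed
qed

theorem quadratic_like_ball:
  assumes "1 + cmod (f 0) < cmod c - \<epsilon>"
  shows "quadratic_like f (ball 0 1) (f ` ball 0 1)"
  unfolding quadratic_like_def
proof (intro conjI allI impI)
  show "closure (ball 0 1) \<subseteq> f ` ball 0 1"
    using cball_subset_image_ball[OF _ assms] by simp
  show "f holomorphic_on ball 0 1" using holomorphic by (rule holomorphic_on_subset) simp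
  show "compact {z \<in> ball 0 1. f z \<in> K}" if "compact K \<and> K \<subseteq> f ` ball 0 1" for K
    using that compact_preimage compact_imp_closed by blast
  show "\<forall>w \<in> f ` ball 0 1. finite {z \<in> ball 0 1. f z = w} \<and>
      (\<Sum>z \<in> {z \<in> ball 0 1. f z = w}. zorder (\<lambda>x. f x - w) z) = 2"
    using fibre_multiplicity by blast
qed (simp_all add: open_image_ball simply_connected_image_ball convex_imp_simply_connected)

end

lemma holomorphic_f0: "f0 holomorphic_on UNIV"
proof -
  have "f0 analytic_on UNIV" unfolding f0_def[abs_def] by (intro analytic_intros)
  then show ?thesis by (rule analytic_imp_holomorphic)
qed

lemma higher_deriv_f0: "(deriv ^^ Suc n) f0 = (\<lambda>z. 10 * (if odd n then cosh z else sinh z))"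
proof (induction n)
  case 0
  have "(f0 has_field_derivative 10 * sinh z) (at z)" for z
    unfolding f0_def by (auto intro!: derivative_eq_intros)
  then show ?case by (simp add: DERIV_imp_deriv fun_eq_iff)
next
  case (Suc n)
  have step: "((\<lambda>z::complex. 10 * (if odd n then cosh z else sinh z)) has_field_derivative
      10 * (if odd (Suc n) then cosh z else sinh z)) (at z)" for z
    by (cases "odd n") (auto intro!: derivative_eq_intros)
  have "(deriv ^^ Suc (Suc n)) f0 = deriv (\<lambda>z. 10 * (if odd n then cosh z else sinh z))"
    using Suc.IH by simp
  also have "\<dots> = (\<lambda>z. 10 * (if odd (Suc n) then cosh z else sinh z))"
    using step by (intro ext DERIV_imp_deriv)
  finally show ?case .
qed

lemma f0_0: "f0 0 = -2"
  by (simp add: f0_def)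

lemma higher_deriv_f0_2: "(deriv ^^ 2) f0 0 = 10"
  using higher_deriv_f0[of 1] by (simp add: numeral_2_eq_2)

lemma norm_higher_deriv_f0_le: "1 \<le> n \<Longrightarrow> cmod ((deriv ^^ n) f0 0) \<le> 10"
  using higher_deriv_f0[of "n - 1"] by (cases n) auto

lemma bounded_higher_deriv_f0: "bounded (range (\<lambda>j. (deriv ^^ j) f0 0))"
proof -
  have "cmod ((deriv ^^ j) f0 0) \<le> 10" for j
    using norm_higher_deriv_f0_le[of j] f0_0 by (cases j) auto
  then show ?thesis unfolding bounded_iff by blast
qed

lemma norm_higher_deriv_diff_le_B_norm:
  assumes "f holomorphic_on UNIV" "g holomorphic_on UNIV"
    and "bounded (range (\<lambda>j. (deriv ^^ j) f 0))" "bounded (range (\<lambda>j. (deriv ^^ j) g 0))"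
  shows "cmod ((deriv ^^ n) f 0 - (deriv ^^ n) g 0) \<le> B_norm (\<lambda>z. f z - g z)"
proof -
  have diff: "(deriv ^^ j) (\<lambda>z. f z - g z) 0 = (deriv ^^ j) f 0 - (deriv ^^ j) g 0" for j
    using assms(1,2) by (rule higher_deriv_diff) auto
  obtain A B where "\<And>j. cmod ((deriv ^^ j) f 0) \<le> A" "\<And>j. cmod ((deriv ^^ j) g 0) \<le> B"
    using assms(3,4) unfolding bounded_iff by auto
  then have "cmod ((deriv ^^ j) f 0 - (deriv ^^ j) g 0) \<le> A + B" for j
    by (meson add_mono norm_triangle_ineq4 order_trans)
  then have "bdd_above (range (\<lambda>j. cmod ((deriv ^^ j) (\<lambda>z. f z - g z) 0)))"
    unfolding diff by (intro bdd_aboveI2)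
  then show ?thesis unfolding B_norm_def diff[symmetric] by (rule cSUP_upper[OF UNIV_I])
qed

theorem lemma4p3:
  fixes f :: "complex \<Rightarrow> complex"
  assumes "in_B f"
    and "B_norm (\<lambda>z. f z - f0 z) < 1/4"
  shows "quadratic_like f (ball 0 1) (f ` ball 0 1)
         \<and> f 0 \<in> complex_of_real ` {..< -1}"
proof -
  from assms(1) have hol: "f holomorphic_on UNIV" and real: "\<And>z. f (cnj z) = cnj (f z)"
    and even: "\<And>z. f (-z) = f z" and bounded: "bounded (range (\<lambda>j. (deriv ^^ j) f 0))"
    by (auto simp: in_B_def)
  have close: "cmod ((deriv ^^ n) f 0 - (deriv ^^ n) f0 0) < 1/4" for n
    using norm_higher_deriv_diff_le_B_norm[OF hol holomorphic_f0 bounded bounded_higher_deriv_f0]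
      assms(2) by (rule le_less_trans)
  have tail: "cmod ((deriv ^^ n) f 0) \<le> 41/4" if "4 \<le> n" for n
    using close[of n] norm_higher_deriv_f0_le[of n] that
      norm_triangle_sub[of "(deriv ^^ n) f 0" "(deriv ^^ n) f0 0"] by simp
  have second: "39/8 \<le> cmod ((deriv ^^ 2) f 0 / 2)"
    using close[of 2] norm_triangle_sub[of 10 "(deriv ^^ 2) f 0"]
    by (simp add: higher_deriv_f0_2 norm_minus_commute)
  have value_0: "cmod (f 0 + 2) < 1/4"
    using close[of 0] by (simp add: f0_0)
  interpret even_near_quadratic f "(deriv ^^ 2) f 0 / 2" "41/36"
    using hol even even_entire_near_quadratic[OF hol even tail] second
    by unfold_locales simp_all
  have "1 + cmod (f 0) < cmod ((deriv ^^ 2) f 0 / 2) - 41/36"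
    using value_0 second norm_triangle_sub[of "f 0" "-2"] by simp
  then have "quadratic_like f (ball 0 1) (f ` ball 0 1)" by (rule quadratic_like_ball)
  moreover have "f 0 \<in> \<real>" using real[of 0] by (simp add: Reals_cnj_iff)
  moreover have "Re (f 0) < -1" using value_0 abs_Re_le_cmod[of "f 0 + 2"] by simp
  ultimately show ?thesis by (auto elim!: Reals_cases)
qed

end
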